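(* Let $\{X_n\}$ be the Bessel-like walk of the context with $\delta>-1$, and let $l_1\ge1$ be an integer as described in the context. There exist constants $K_3,K_4>0$ (depending only on $\epsilon$, $l_1$ and the transition probabilities) such that for all integers $h>l_1$ and $m\ge 4h^2$, \[ P_0\big(X_n\in(0,h)\text{ for all } 1\le n\le m\big)\le\frac{K_3}{M_h}e^{-K_4m/h^2}. \]
   Context: Let $\{X_n\}_{n\ge0}$ be a Markov chain on $\mathbb{Z}_+=\{0,1,2,\dots\}$ with steps $\pm1$, reflecting at $0$ (i.e. $p(0,1)=1$), and for $x\ge1$ transition probabilities $p_x=p(x,x+1)$, $q_x=p(x,x-1)=1-p_x$. A drift parameter $\delta$ is fixed and $R_x$ is defined by $p_x=\frac12\left(1-\frac{\delta}{2x}+\frac{R_x}{2}\right)$, where $R_x=o(1/x)$. Uniform ellipticity: there is $\epsilon>0$ with $p_x,q_x\in[\epsilon,1-\epsilon]$ for all $x\ge1$. Set $\kappa=(1+\delta)/2$, $\lambda_0=1$, $\lambda_x=\prod_{k=1}^xq_k/p_k$, $M_0=0$, $M_x=\sum_{k=0}^{x-1}\lambda_k$, and $L(x)=\exp(R_1+\dots+R_x)$. Let $K_0>0$ be the constant with $\lambda_x\sim K_0x^{2\kappa-1}L(x)^{-1}$. The integer $l_1\ge1$ is chosen so that for all $x\ge l_1$: $x|R_x|\le\frac12$; $\frac{2\kappa M_x}{K_0x^{2\kappa}L(x)^{-1}}\in(\frac78,\frac98)$; $\frac{2\kappa(M_{2x}-M_x)}{K_0(2^{2\kappa}-1)x^{2\kappa}L(x)^{-1}}\in(\frac78,\frac98)$;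 and, if $\delta\ne0$, $|x(2p_x-1)+\frac\delta2|<\frac{|\delta|}{4}$. $P_0$ is the law of the chain started at $0$. *)

theory Defs
  imports "HOL-Analysis.Analysis" "HOL-Library.Landau_Symbols"
begin

definition trans_prob :: "(nat \<Rightarrow> real) \<Rightarrow> nat \<Rightarrow> nat \<Rightarrow> real" where
  "trans_prob p x y =
     (if x = 0 then (if y = 1 then 1 else 0)
      else if y = x + 1 then p x
      else if y + 1 = x then 1 - p x
      else 0)"

text \<open>P_0(X_n \<in> (0,h) for all 1 \<le> n \<le> m): sum over all admissible paths
  x_1,...,x_m (list xs) of the product of transition probabilities, with x_0 = 0.\<close>
definition stay_prob :: "(nat \<Rightarrow> real) \<Rightarrow> nat \<Rightarrow> nat \<Rightarrow> real" where
  "stay_prob p h m =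
     (\<Sum>xs\<in>{xs. length xs = m \<and> set xs \<subseteq> {0<..<h}}.
        \<Prod>i<m. trans_prob p ((0 # xs) ! i) ((0 # xs) ! (i + 1)))"

definition Rterm :: "(nat \<Rightarrow> real) \<Rightarrow> real \<Rightarrow> nat \<Rightarrow> real" where
  "Rterm p \<delta> x = 4 * p x - 2 + \<delta> / real x"

definition kappa :: "real \<Rightarrow> real" where
  "kappa \<delta> = (1 + \<delta>) / 2"

definition lam :: "(nat \<Rightarrow> real) \<Rightarrow> nat \<Rightarrow> real" where
  "lam p x = (\<Prod>k\<in>{1..x}. (1 - p k) / p k)"

definition Mfun :: "(nat \<Rightarrow> real) \<Rightarrow> nat \<Rightarrow> real" where
  "Mfun p x = (\<Sum>k<x. lam p k)"

definition Lfun :: "(nat \<Rightarrow> real) \<Rightarrow> real \<Rightarrow> nat \<Rightarrow> real" where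
  "Lfun p \<delta> x = exp (\<Sum>k\<in>{1..x}. Rterm p \<delta> k)"

end

theory Submission
  imports Defs "HOL-Real_Asymp.Real_Asymp"
begin

(* The survival probability u_h(n,x) = P_x(X_1, ..., X_n \<in> (0,h)) is the n-th power of the
   transition operator killed outside (0,h), applied to 1.  The Green function of the walk is a
   Lyapunov function with drift -1 of size O(h^2) (as M y = O(y lam y)), so u_h decays like
   exp(-c n / h^2).  To gain the factor 1 / M h, compare with a smaller scale a ~ h / 2^t: started
   at 1, the walk either survives n/2 steps in (0,a), or it reaches a before 0, which has
   probability M 1 / M a = 1 / M a since M is harmonic, and then survives n/2 further steps
   in (0,h).  Induction on h, with the doubling bound M h <= rho^t M a and t so large that the
   gain in the exponent beats rho^t, gives u_h(n,1) <= K / M h * exp(-c n / (4 h^2)). *)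

definition killed_step :: "(nat \<Rightarrow> real) \<Rightarrow> nat \<Rightarrow> (nat \<Rightarrow> real) \<Rightarrow> nat \<Rightarrow> real" where
  "killed_step p h F x = (\<Sum>y\<in>{0<..<h}. trans_prob p x y * F y)"

definition survival :: "(nat \<Rightarrow> real) \<Rightarrow> nat \<Rightarrow> nat \<Rightarrow> nat \<Rightarrow> real" where
  "survival p h k = (killed_step p h ^^ k) (\<lambda>_. 1)"

lemma killed_step_eq:
  assumes "0 < x" "x < h"
  shows "killed_step p h F x =
    (if x + 1 < h then p x * F (x + 1) else 0) + (if 2 \<le> x then (1 - p x) * F (x - 1) else 0)"
proof -
  have "trans_prob p x y * F y =
      (if y = x + 1 then p x * F y else 0) + (if y = x - 1 then (1 - p x) * F y else 0)" for y
    using assms by (auto simp: trans_prob_def)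
  then have "killed_step p h F x = (\<Sum>y\<in>{0<..<h}. if y = x + 1 then p x * F y else 0)
      + (\<Sum>y\<in>{0<..<h}. if y = x - 1 then (1 - p x) * F y else 0)"
    by (simp add: killed_step_def sum.distrib)
  then show ?thesis
    using assms by (auto simp: sum.delta')
qed

lemma killed_step_at_0:
  assumes "2 \<le> h"
  shows "killed_step p h F 0 = F 1"
  using assms by (simp add: killed_step_def trans_prob_def if_distrib[where f="\<lambda>z. z * _"] sum.delta
      cong: if_cong)

lemma killed_iter_lincomb:
  "(killed_step p h ^^ k) (\<lambda>y. a * F y + b * G y) x =
     a * (killed_step p h ^^ k) F x + b * (killed_step p h ^^ k) G x"
proof (induction k arbitrary: x)
  case (Suc k)
  then show ?case
    by (simp add: killed_step_def sum.distrib sum_distrib_left algebra_simps)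
qed simp

lemma path_sum_eq_survival:
  "(\<Sum>xs\<in>{xs. length xs = n \<and> set xs \<subseteq> {0<..<h}}.
      \<Prod>i<n. trans_prob p ((x # xs) ! i) ((x # xs) ! (i + 1))) = survival p h n x"
proof (induction n arbitrary: x)
  case 0
  have "{xs. length xs = 0 \<and> set xs \<subseteq> {0<..<h}} = {[]}" by auto
  then show ?case by (simp add: survival_def)
next
  case (Suc n)
  define L where "L n = {xs. length xs = n \<and> set xs \<subseteq> {0<..<h}}" for n
  have L_Suc: "L (Suc n) = (\<lambda>(y, ys). y # ys) ` ({0<..<h} \<times> L n)"
    by (auto simp: L_def length_Suc_conv image_iff)
  have inj: "inj_on (\<lambda>(y, ys). y # ys) ({0<..<h} \<times> L n)"
    by (auto simp: inj_on_def)
  have "(\<Sum>xs\<in>L (Suc n). \<Prod>i<Suc n. trans_prob p ((x # xs) ! i) ((x # xs) ! (i + 1)))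
      = (\<Sum>(y, ys)\<in>{0<..<h} \<times> L n.
           trans_prob p x y * (\<Prod>i<n. trans_prob p ((y # ys) ! i) ((y # ys) ! (i + 1))))"
    unfolding L_Suc sum.reindex[OF inj]
    by (rule sum.cong[OF refl]) (clarify, simp only: prod.lessThan_Suc_shift, simp)
  also have "\<dots> = (\<Sum>y\<in>{0<..<h}. trans_prob p x y *
      (\<Sum>ys\<in>L n. \<Prod>i<n. trans_prob p ((y # ys) ! i) ((y # ys) ! (i + 1))))"
    by (simp add: sum.cartesian_product[symmetric] sum_distrib_left)
  also have "\<dots> = (\<Sum>y\<in>{0<..<h}. trans_prob p x y * survival p h n y)"
    using Suc.IH by (simp add: L_def)
  finally show ?case
    by (simp add: L_def survival_def killed_step_def)
qed

lemma stay_prob_eq_survival: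
  assumes "2 \<le> h" "1 \<le> m"
  shows "stay_prob p h m = survival p h (m - 1) 1"
proof -
  obtain k where "m = Suc k" using assms(2) by (cases m) auto
  then show ?thesis
    using assms(1) unfolding stay_prob_def path_sum_eq_survival survival_def
    by (simp add: killed_step_at_0)
qed

locale birth_death =
  fixes p :: "nat \<Rightarrow> real"
  assumes p_prob: "\<And>x. 1 \<le> x \<Longrightarrow> 0 \<le> p x \<and> p x \<le> 1"
begin

lemma trans_prob_nonneg: "0 \<le> trans_prob p x y"
  using p_prob[of x] by (auto simp: trans_prob_def)

lemma killed_iter_mono:
  assumes "\<forall>y\<in>{0<..<h}. F y \<le> G y" "x \<in> {0<..<h}"
  shows "(killed_step p h ^^ k) F x \<le> (killed_step p h ^^ k) G x"
  using assms(2)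
proof (induction k arbitrary: x)
  case (Suc k)
  then show ?case
    unfolding funpow.simps o_apply killed_step_def
    by (intro sum_mono mult_left_mono trans_prob_nonneg) auto
qed (use assms(1) in simp)

lemma killed_iter_le_scaled_survival:
  assumes "\<forall>y\<in>{0<..<h}. F y \<le> b" "x \<in> {0<..<h}"
  shows "(killed_step p h ^^ k) F x \<le> b * survival p h k x"
proof -
  have "(killed_step p h ^^ k) F x \<le> (killed_step p h ^^ k) (\<lambda>y. b * 1 + 0 * F y) x"
    using assms by (intro killed_iter_mono) auto
  then show ?thesis
    unfolding killed_iter_lincomb survival_def by simp
qed

lemma killed_iter_nonneg:
  assumes "\<forall>y\<in>{0<..<h}. 0 \<le> F y" "x \<in> {0<..<h}"
  shows "0 \<le> (killed_step p h ^^ k) F x"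
proof -
  have "(killed_step p h ^^ k) (\<lambda>y. 0 * F y + 0 * F y) x \<le> (killed_step p h ^^ k) F x"
    using assms by (intro killed_iter_mono) auto
  then show ?thesis
    unfolding killed_iter_lincomb by simp
qed

lemma survival_antimono:
  assumes "x \<in> {0<..<h}" "k \<le> n"
  shows "survival p h n x \<le> survival p h k x"
proof -
  have "survival p h (Suc k) x \<le> survival p h k x" for k
  proof -
    have "killed_step p h (\<lambda>_. 1) y \<le> 1" if "y \<in> {0<..<h}" for y
      using that p_prob[of y] by (auto simp: killed_step_eq)
    then show ?thesis
      unfolding survival_def funpow_Suc_right o_apply
      using assms(1) by (intro killed_iter_mono) auto
  qed
  then show ?thesis
    using lift_Suc_antimono_le[of "\<lambda>k. survival p h k x"] assms(2) by blast
qed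

lemma survival_le_one: "x \<in> {0<..<h} \<Longrightarrow> survival p h k x \<le> 1"
  using survival_antimono[of x h 0 k] by (simp add: survival_def)

lemma survival_le_lyapunov:
  assumes V_nonneg: "\<forall>y\<in>{0<..<h}. 0 \<le> V y"
    and V_drift: "\<forall>y\<in>{0<..<h}. killed_step p h V y \<le> V y - 1"
    and x: "x \<in> {0<..<h}"
  shows "real n * survival p h n x \<le> V x"
proof -
  have "(\<Sum>k<n. survival p h k x) \<le> V x - (killed_step p h ^^ n) V x"
    using x
  proof (induction n arbitrary: x)
    case (Suc n)
    have "(killed_step p h ^^ Suc n) V x \<le> (killed_step p h ^^ n) (\<lambda>y. 1 * V y + (-1) * 1) x"
      unfolding funpow_Suc_right o_apply using V_drift Suc.prems by (intro killed_iter_mono) auto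
    also have "\<dots> = (killed_step p h ^^ n) V x - survival p h n x"
      unfolding killed_iter_lincomb survival_def by simp
    finally show ?case
      using Suc.IH[OF Suc.prems] by simp
  qed simp
  moreover have "real n * survival p h n x \<le> (\<Sum>k<n. survival p h k x)"
    using sum_mono[of "{..<n}" "\<lambda>_. survival p h n x"] survival_antimono[OF x] by simp
  moreover have "0 \<le> (killed_step p h ^^ n) V x"
    using killed_iter_nonneg[OF V_nonneg x] .
  ultimately show ?thesis by linarith
qed

lemma survival_geometric:
  assumes half: "\<And>y. y \<in> {0<..<h} \<Longrightarrow> survival p h N y \<le> 1/2" and "x \<in> {0<..<h}"
  shows "survival p h (j * N) x \<le> (1/2) ^ j"
  using assms(2)
proof (induction j arbitrary: x)
  case (Suc j)
  have "survival p h (Suc j * N) x = (killed_step p h ^^ N) (survival p h (j * N)) x"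
    by (simp add: survival_def funpow_add add.commute)
  also have "\<dots> \<le> (1/2) ^ j * survival p h N x"
    using Suc by (intro killed_iter_le_scaled_survival) auto
  also have "\<dots> \<le> (1/2) ^ Suc j"
    using half[OF Suc.prems] by simp
  finally show ?case .
qed (simp add: survival_def)

lemma survival_exp_decay:
  assumes V_nonneg: "\<forall>y\<in>{0<..<h}. 0 \<le> V y" and V_le: "\<forall>y\<in>{0<..<h}. V y \<le> D"
    and V_drift: "\<forall>y\<in>{0<..<h}. killed_step p h V y \<le> V y - 1"
    and x: "x \<in> {0<..<h}"
  shows "survival p h k x \<le> 2 * exp (- ln 2 * real k / (2 * D + 1))"
proof -
  have "0 \<le> killed_step p h V x"
    using killed_iter_nonneg[OF V_nonneg x, of 1] by simp
  moreover have "killed_step p h V x \<le> V x - 1" "V x \<le> D"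
    using V_drift V_le x by auto
  ultimately have D_pos: "0 < D"
    by linarith
  define N where "N = nat \<lceil>2 * D\<rceil>"
  have N: "2 * D \<le> real N" "real N \<le> 2 * D + 1" "0 < N"
    unfolding N_def using D_pos by linarith+
  have half: "survival p h N y \<le> 1/2" if y: "y \<in> {0<..<h}" for y
  proof -
    have "real N * survival p h N y \<le> D"
      using survival_le_lyapunov[OF V_nonneg V_drift y] V_le y by (meson order_trans)
    then have "survival p h N y \<le> D / real N"
      using N by (simp add: le_divide_eq mult.commute)
    also have "\<dots> \<le> 1/2"
      using N by (simp add: divide_le_eq)
    finally show ?thesis .
  qed
  define j where "j = k div N"
  have "k < N * j + N"
    using mod_less_divisor[OF N(3), of k] mult_div_mod_eq[of N k] unfolding j_def by linarith
  then have "real k < real N * (real j + 1)"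
    by (simp add: algebra_simps flip: of_nat_mult of_nat_add)
  also have "\<dots> \<le> (2 * D + 1) * (real j + 1)"
    using N by (intro mult_right_mono) auto
  finally have "real k / (2 * D + 1) \<le> real j + 1"
    using D_pos by (simp add: divide_le_eq mult.commute)
  then have exp_le: "exp (- ln 2 * real (j + 1)) \<le> exp (- ln 2 * real k / (2 * D + 1))"
    using mult_left_mono[of "real k / (2 * D + 1)" "real j + 1" "ln 2"] by (simp add: algebra_simps)
  have "survival p h k x \<le> (1/2) ^ j"
    using survival_antimono[OF x, of "j * N" k] survival_geometric[OF half x, of j] by (simp add: j_def)
  also have "\<dots> = 2 * (1/2) ^ (j + 1)"
    by simp
  also have "(1/2) ^ (j + 1) = exp (- ln 2 * real (j + 1))"
    by (subst mult.commute, subst exp_of_nat_mult) (simp add: exp_minus)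
  finally show ?thesis
    using exp_le by linarith
qed

end

lemma Mfun_0 [simp]: "Mfun p 0 = 0"
  by (simp add: Mfun_def)

lemma Mfun_Suc [simp]: "Mfun p (Suc x) = Mfun p x + lam p x"
  by (simp add: Mfun_def)

lemma lam_0 [simp]: "lam p 0 = 1"
  by (simp add: lam_def)

lemma Mfun_1 [simp]: "Mfun p 1 = 1"
  by (simp add: Mfun_def)

lemma kappa_pos: "-1 < \<delta> \<Longrightarrow> 0 < kappa \<delta>"
  by (simp add: kappa_def)

lemma Lfun_pos: "0 < Lfun p \<delta> x"
  by (simp add: Lfun_def)

lemma doubling_iterate:
  fixes f :: "nat \<Rightarrow> real"
  assumes double: "\<And>x. l \<le> x \<Longrightarrow> f (2 * x) \<le> \<rho> * f x" and "0 \<le> \<rho>" "l \<le> x"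
  shows "f (2 ^ i * x) \<le> \<rho> ^ i * f x"
proof (induction i)
  case (Suc i)
  have "l \<le> 2 ^ i * x"
    using assms(3) by (metis le_trans mult_le_mono1 mult_1 one_le_numeral one_le_power)
  then have "f (2 ^ Suc i * x) \<le> \<rho> * f (2 ^ i * x)"
    using double[of "2 ^ i * x"] by (simp add: mult.assoc)
  also have "\<dots> \<le> \<rho> ^ Suc i * f x"
    using Suc mult_left_mono[OF Suc \<open>0 \<le> \<rho>\<close>] by simp
  finally show ?case .
qed simp

lemma Mfun_double_le:
  assumes \<kappa>: "0 < kappa \<delta>" and K0: "0 < K0" and x: "0 < x"
    and M: "2 * kappa \<delta> * Mfun p x / (K0 * real x powr (2 * kappa \<delta>) / Lfun p \<delta> x) \<in> {7/8<..<9/8}"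
    and M_double: "2 * kappa \<delta> * (Mfun p (2 * x) - Mfun p x) /
        (K0 * (2 powr (2 * kappa \<delta>) - 1) * real x powr (2 * kappa \<delta>) / Lfun p \<delta> x) \<in> {7/8<..<9/8}"
  shows "Mfun p (2 * x) \<le> (1 + 9/7 * (2 powr (2 * kappa \<delta>) - 1)) * Mfun p x"
proof -
  define A where "A = K0 * real x powr (2 * kappa \<delta>) / Lfun p \<delta> x"
  define D where "D = 2 powr (2 * kappa \<delta>) - 1"
  have A: "0 < A" unfolding A_def using x K0 Lfun_pos by simp
  have D: "0 < D" unfolding D_def using \<kappa> by simp
  have "7/8 < 2 * kappa \<delta> * Mfun p x / A"
    using M unfolding A_def by simp
  then have lower: "7/8 * A < 2 * kappa \<delta> * Mfun p x"
    using A by (simp add: less_divide_eq)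
  have "K0 * D * real x powr (2 * kappa \<delta>) / Lfun p \<delta> x = D * A"
    unfolding A_def by simp
  then have "2 * kappa \<delta> * (Mfun p (2 * x) - Mfun p x) / (D * A) < 9/8"
    using M_double unfolding D_def by simp
  then have "2 * kappa \<delta> * (Mfun p (2 * x) - Mfun p x) < 9/7 * D * (7/8 * A)"
    using A D by (simp add: divide_less_eq mult.commute)
  also have "\<dots> \<le> 9/7 * D * (2 * kappa \<delta> * Mfun p x)"
    using lower D by (intro mult_left_mono) auto
  finally have "2 * kappa \<delta> * (Mfun p (2 * x) - Mfun p x) < 2 * kappa \<delta> * (9/7 * D * Mfun p x)"
    by (simp add: algebra_simps)
  then have "Mfun p (2 * x) - Mfun p x < 9/7 * D * Mfun p x"
    using \<kappa> by simp
  then show ?thesis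
    unfolding D_def by (simp add: algebra_simps)
qed

lemma Mfun_doubling:
  assumes \<kappa>: "0 < kappa \<delta>" and K0: "0 < K0" and l: "1 \<le> l"
    and M: "\<And>x. l \<le> x \<Longrightarrow>
      2 * kappa \<delta> * Mfun p x / (K0 * real x powr (2 * kappa \<delta>) / Lfun p \<delta> x) \<in> {7/8<..<9/8}"
    and M_double: "\<And>x. l \<le> x \<Longrightarrow> 2 * kappa \<delta> * (Mfun p (2 * x) - Mfun p x) /
        (K0 * (2 powr (2 * kappa \<delta>) - 1) * real x powr (2 * kappa \<delta>) / Lfun p \<delta> x) \<in> {7/8<..<9/8}"
  obtains \<rho> where "1 \<le> \<rho>" "\<And>x i. l \<le> x \<Longrightarrow> Mfun p (2 ^ i * x) \<le> \<rho> ^ i * Mfun p x"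
proof -
  define \<rho> where "\<rho> = 1 + 9/7 * (2 powr (2 * kappa \<delta>) - 1)"
  have "1 \<le> 2 powr (2 * kappa \<delta>)"
    using \<kappa> by (intro ge_one_powr_ge_zero) auto
  then have \<rho>: "1 \<le> \<rho>"
    unfolding \<rho>_def by simp
  moreover have "Mfun p (2 ^ i * x) \<le> \<rho> ^ i * Mfun p x" if "l \<le> x" for x i
    using doubling_iterate[of l "Mfun p" \<rho>] Mfun_double_le[OF \<kappa> K0 _ M M_double] \<rho> l that
    unfolding \<rho>_def by force
  ultimately show thesis
    using that by blast
qed

lemma exists_scale_exponent:
  fixes \<rho> c :: real
  assumes "1 \<le> \<rho>" "0 < c"
  obtains t :: nat where "2 \<le> t" "2 * \<rho> ^ t * exp (- c * (4 ^ t / 16 - 1)) \<le> 1"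
proof -
  have "((\<lambda>t::nat. exp (real t * ln \<rho> - c * (4 powr real t / 16 - 1))) \<longlongrightarrow> 0) at_top"
    using assms by real_asymp
  then have "eventually (\<lambda>t::nat. exp (real t * ln \<rho> - c * (4 powr real t / 16 - 1)) < 1/2) at_top"
    by (rule order_tendstoD) simp
  moreover have "eventually (\<lambda>t::nat. 2 \<le> t) at_top"
    by (rule eventually_ge_at_top)
  ultimately have "eventually (\<lambda>t::nat. 2 \<le> t \<and>
      exp (real t * ln \<rho> - c * (4 powr real t / 16 - 1)) < 1/2) at_top"
    by (simp add: eventually_conj_iff)
  then obtain t :: nat where t: "2 \<le> t" "exp (real t * ln \<rho> - c * (4 powr real t / 16 - 1)) < 1/2"
    unfolding eventually_at_top_linorder by blast
  have "(4::real) powr real t = 4 ^ t"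
    by (simp add: powr_realpow)
  moreover have "exp (real t * ln \<rho> - c * (4 ^ t / 16 - 1))
      = exp (real t * ln \<rho>) * exp (- c * (4 ^ t / 16 - 1))"
    by (simp only: diff_conv_add_uminus exp_add minus_mult_left)
  moreover have "exp (real t * ln \<rho>) = \<rho> ^ t"
    using assms(1) by (simp add: exp_of_nat_mult)
  ultimately have "\<rho> ^ t * exp (- c * (4 ^ t / 16 - 1)) < 1/2"
    using t(2) by simp
  then show thesis
    using that[OF t(1)] by simp
qed

lemma coarse_scale:
  fixes h t l :: nat
  assumes "2 \<le> t" "2 ^ t * (l + 2) \<le> h"
  obtains a where "l \<le> a" "2 \<le> a" "2 * a \<le> h" "h \<le> 2 ^ t * a" "2 ^ t * a \<le> 2 * h"
proof
  define T :: nat where "T = 2 ^ t"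
  define d where "d = h div T"
  have d: "l + 2 \<le> d"
    unfolding d_def T_def using div_le_mono[OF assms(2), of "2 ^ t"] by simp
  have "T * d + h mod T = h" "h mod T < T"
    unfolding d_def T_def by simp_all
  then have Td: "T * d \<le> h" "h < T * d + T"
    by linarith+
  have T: "4 \<le> T"
    unfolding T_def using power_increasing[OF assms(1), of "2::nat"] by simp
  have "T \<le> T * d"
    using d by simp
  moreover have "T * (d + 1) = T * d + T"
    by simp
  ultimately have upper: "T * (d + 1) \<le> 2 * h"
    using Td by linarith
  have "4 * (d + 1) \<le> T * (d + 1)"
    using T by (rule mult_right_mono) simp
  with upper show "2 * (d + 1) \<le> h"
    by linarith
  show "l \<le> d + 1" "2 \<le> d + 1"
    using d by simp_all
  show "h \<le> 2 ^ t * (d + 1)" "2 ^ t * (d + 1) \<le> 2 * h"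
    using Td upper unfolding T_def by (simp_all add: algebra_simps)
qed

lemma halve_time:
  fixes n :: nat
  assumes "2 \<le> n"
  obtains j where "j \<le> n" "real n / 4 \<le> real j" "real n / 2 \<le> real (n - j)"
proof
  have "n = 2 * (n div 2) + n mod 2" "n mod 2 \<le> 1"
    by simp_all
  then show "real n / 4 \<le> real (n div 2)" "real n / 2 \<le> real (n - n div 2)"
    using assms by linarith+
qed simp

lemma rescaled_time_ratio:
  fixes a h j n t :: nat
  assumes "2 \<le> t" "0 < a" "2 ^ t * a \<le> 2 * h" "real h ^ 2 \<le> real n" "real n / 4 \<le> real j"
  shows "4 ^ t / 16 * (real n / real h ^ 2) \<le> real j / real a ^ 2" and "real a ^ 2 \<le> real j"
proof -
  have "0 < 2 ^ t * a"
    using assms(2) by simp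
  then have "0 < h"
    using assms(3) by linarith
  then have h: "0 < real h"
    by simp
  have "real (2 ^ t * a) \<le> real (2 * h)"
    using assms(3) by (simp only: of_nat_le_iff)
  then have "(2 ^ t * real a) ^ 2 \<le> (2 * real h) ^ 2"
    by (intro power_mono) auto
  moreover have "(4::real) ^ t = 2 ^ t * 2 ^ t"
    by (simp flip: power_mult_distrib)
  ultimately have a_sq: "4 ^ t * real a ^ 2 \<le> 4 * real h ^ 2"
    by (simp add: power2_eq_square algebra_simps)
  have "4 ^ t / 16 * (real n / real h ^ 2) = (real n / 4) / (4 * real h ^ 2 / 4 ^ t)"
    using h by (simp add: field_simps)
  also have "\<dots> \<le> real j / real a ^ 2"
    using assms a_sq h by (intro frac_le) (auto simp: field_simps)
  finally show ratio: "4 ^ t / 16 * (real n / real h ^ 2) \<le> real j / real a ^ 2" .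
  have "16 \<le> (4::real) ^ t"
    using power_increasing[OF assms(1), of "4::real"] by simp
  moreover have "1 \<le> real n / real h ^ 2"
    using assms(4) h by simp
  ultimately have "1 * 1 \<le> 4 ^ t / 16 * (real n / real h ^ 2)"
    by (intro mult_mono) auto
  then have "1 \<le> real j / real a ^ 2"
    using ratio by linarith
  then show "real a ^ 2 \<le> real j"
    by (subst (asm) le_divide_eq_1_pos) (use assms(2) in auto)
qed

lemma exp_rescaled_le:
  fixes c q s \<tau> R :: real
  assumes "0 \<le> c" "1 \<le> q" "1 \<le> \<tau>" "q * \<tau> \<le> s"
    and "0 < R" "2 * R * exp (- c * (q - 1)) \<le> 1"
  shows "exp (- c * s) \<le> exp (- c * \<tau>) / (2 * R)"
proof -
  have "0 \<le> c * ((q - 1) * (\<tau> - 1))"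
    using assms by simp
  moreover have "c * (q * \<tau>) \<le> c * s"
    using assms by (intro mult_left_mono) auto
  ultimately have "- c * s \<le> - c * \<tau> + - c * (q - 1)"
    by (simp add: algebra_simps)
  then have "exp (- c * s) \<le> exp (- c * \<tau>) * exp (- c * (q - 1))"
    by (simp flip: exp_add)
  also have "\<dots> \<le> exp (- c * \<tau>) / (2 * R)"
    using assms(5,6) by (simp add: field_simps)
  finally show ?thesis .
qed

text \<open>The Green-function solution of the Poisson equation P V = V - 1 on (0,h) with V 0 = 0;
  1 / (p y * lam p y) is the reversible measure of the walk.\<close>

definition exit_potential :: "(nat \<Rightarrow> real) \<Rightarrow> nat \<Rightarrow> nat \<Rightarrow> real" where
  "exit_potential p h x = (\<Sum>y\<in>{1..<h}. Mfun p (min x y) / (p y * lam p y))"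

lemma exit_potential_0 [simp]: "exit_potential p h 0 = 0"
  by (simp add: exit_potential_def)

locale elliptic_walk =
  fixes p :: "nat \<Rightarrow> real" and \<epsilon> :: real
  assumes eps_pos: "0 < \<epsilon>"
    and elliptic: "\<And>x. 1 \<le> x \<Longrightarrow> \<epsilon> \<le> p x \<and> p x \<le> 1 - \<epsilon>"
begin

sublocale birth_death
  using eps_pos elliptic by unfold_locales force

lemma p_pos: "1 \<le> x \<Longrightarrow> 0 < p x"
  and q_pos: "1 \<le> x \<Longrightarrow> 0 < 1 - p x"
  using eps_pos elliptic[of x] by auto

lemma lam_pos: "0 < lam p x"
  unfolding lam_def using p_pos q_pos by (intro prod_pos) auto

lemma p_mult_lam:
  assumes "1 \<le> x"
  shows "p x * lam p x = (1 - p x) * lam p (x - 1)"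
proof -
  obtain k where "x = Suc k" using assms by (cases x) auto
  then show ?thesis
    using p_pos[OF assms] by (simp add: lam_def)
qed

lemma Mfun_mono: "x \<le> y \<Longrightarrow> Mfun p x \<le> Mfun p y"
  using lift_Suc_mono_le[of "Mfun p"] lam_pos by (simp add: less_imp_le)

lemma Mfun_ge_one: "1 \<le> x \<Longrightarrow> 1 \<le> Mfun p x"
  using Mfun_mono[of 1 x] by simp

lemma Mfun_nonneg: "0 \<le> Mfun p x"
  using Mfun_mono[of 0 x] by simp

lemma Mfun_harmonic:
  assumes "1 \<le> x"
  shows "p x * Mfun p (x + 1) + (1 - p x) * Mfun p (x - 1) = Mfun p x"
proof -
  obtain k where "x = Suc k" using assms by (cases x) auto
  then show ?thesis
    using p_mult_lam[OF assms] by (simp add: algebra_simps)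
qed

text \<open>Starting from x < a, the walk either stays in (0,a) for j steps, or within j steps it reaches
  a before 0, which by harmonicity of M has probability at most M x / M a, and must then survive
  the remaining n - j steps in (0,h).\<close>

lemma survival_le_hitting_decomposition:
  assumes a: "2 \<le> a" "a \<le> h"
    and b: "\<And>k y. y \<in> {0<..<h} \<Longrightarrow> survival p h k y \<le> b k" "\<And>k. 0 \<le> b k" "decseq b"
  shows "j \<le> n \<Longrightarrow> x \<in> {0<..<a} \<Longrightarrow>
    survival p h n x \<le> survival p a j x + Mfun p x / Mfun p a * b (n - j)"
proof (induction j arbitrary: n x)
  case 0
  have "0 \<le> Mfun p x / Mfun p a * b n"
    using Mfun_nonneg b(2) by simp
  then show ?case
    using survival_le_one[of x h n] 0 a by (simp add: survival_def)
next
  case (Suc j)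
  obtain n' where n': "n = Suc n'" using Suc.prems by (cases n) auto
  have x: "0 < x" "x < a" using Suc.prems by auto
  define B where "B = b (n - Suc j)"
  define \<phi> where "\<phi> y = Mfun p y / Mfun p a * B" for y
  have \<phi>_nonneg: "0 \<le> \<phi> y" for y
    unfolding \<phi>_def B_def using Mfun_nonneg b(2) by simp
  have \<phi>_a: "\<phi> a = B"
    unfolding \<phi>_def using Mfun_ge_one[of a] a by simp
  have IH: "survival p h n' y \<le> survival p a j y + \<phi> y" if "y \<in> {0<..<a}" for y
    using Suc.IH[of n' y] Suc.prems that n' unfolding \<phi>_def B_def by simp
  have up: "(if x + 1 < h then p x * survival p h n' (x + 1) else 0)
      \<le> (if x + 1 < a then p x * survival p a j (x + 1) else 0) + p x * \<phi> (x + 1)"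
  proof (cases "x + 1 < a")
    case True
    then show ?thesis
      using mult_left_mono[OF IH[of "x + 1"], of "p x"] p_pos[of x] x a by (simp add: distrib_left)
  next
    case False
    then have "x + 1 = a" using x by simp
    moreover have "survival p h n' a \<le> B" if "a < h"
    proof -
      have "survival p h n' a \<le> b n'"
        using b(1)[of a n'] that a by simp
      also have "\<dots> \<le> B"
        unfolding B_def n' using decseqD[OF b(3)] by simp
      finally show ?thesis .
    qed
    ultimately show ?thesis
      using p_pos[of x] x \<phi>_a \<phi>_nonneg[of a] by (auto intro: mult_left_mono)
  qed
  have down: "(if 2 \<le> x then (1 - p x) * survival p h n' (x - 1) else 0)
      \<le> (if 2 \<le> x then (1 - p x) * survival p a j (x - 1) else 0) + (1 - p x) * \<phi> (x - 1)"
  proof (cases "2 \<le> x")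
    case True
    then show ?thesis
      using mult_left_mono[OF IH[of "x - 1"], of "1 - p x"] q_pos[of x] x by (simp add: distrib_left)
  qed (use x in \<open>simp add: \<phi>_def\<close>)
  have "p x * \<phi> (x + 1) + (1 - p x) * \<phi> (x - 1)
      = (p x * Mfun p (x + 1) + (1 - p x) * Mfun p (x - 1)) / Mfun p a * B"
    unfolding \<phi>_def by (simp add: algebra_simps add_divide_distrib diff_divide_distrib)
  also have "\<dots> = \<phi> x"
    unfolding \<phi>_def using Mfun_harmonic[of x] x by simp
  finally have "p x * \<phi> (x + 1) + (1 - p x) * \<phi> (x - 1) = \<phi> x" .
  then show ?case
    using up down x a unfolding n' B_def \<phi>_def survival_def
    by (simp add: killed_step_eq)
qed

lemma exit_potential_nonneg: "0 \<le> exit_potential p h x"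
  unfolding exit_potential_def using Mfun_nonneg p_pos lam_pos
  by (intro sum_nonneg divide_nonneg_pos) auto

lemma exit_potential_poisson:
  assumes x: "0 < x" "x < h"
  shows "p x * exit_potential p h (x + 1) + (1 - p x) * exit_potential p h (x - 1)
    = exit_potential p h x - 1"
proof -
  define d where "d y = p y * lam p y" for y
  have numerator: "p x * Mfun p (min (x + 1) y) + (1 - p x) * Mfun p (min (x - 1) y)
      = Mfun p (min x y) - (if y = x then d y else 0)" for y
  proof -
    consider "x < y" | "y < x" | "y = x" by linarith
    then show ?thesis
    proof cases
      case 1
      then have "min (x + 1) y = x + 1" "min (x - 1) y = x - 1" "min x y = x" by auto
      then show ?thesis using Mfun_harmonic[of x] x 1 by simp
    next
      case 2
      then have "min (x + 1) y = y" "min (x - 1) y = y" "min x y = y" by auto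
      then show ?thesis using 2 by (simp add: algebra_simps)
    next
      case 3
      obtain k where "x = Suc k" using x by (cases x) auto
      then show ?thesis
        using 3 p_mult_lam[of x] by (simp add: d_def algebra_simps)
    qed
  qed
  have per_term: "p x * (Mfun p (min (x + 1) y) / d y) + (1 - p x) * (Mfun p (min (x - 1) y) / d y)
      = Mfun p (min x y) / d y - (if y = x then 1 else 0)" if "y \<in> {1..<h}" for y
  proof -
    have "d y > 0" unfolding d_def using that p_pos lam_pos by simp
    have "p x * (Mfun p (min (x + 1) y) / d y) + (1 - p x) * (Mfun p (min (x - 1) y) / d y)
        = (p x * Mfun p (min (x + 1) y) + (1 - p x) * Mfun p (min (x - 1) y)) / d y"
      by (simp add: add_divide_distrib)
    also have "\<dots> = (Mfun p (min x y) - (if y = x then d y else 0)) / d y"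
      by (simp only: numerator)
    also have "\<dots> = Mfun p (min x y) / d y - (if y = x then 1 else 0)"
      using \<open>d y > 0\<close> by (cases "y = x") (simp_all add: diff_divide_distrib)
    finally show ?thesis .
  qed
  have "p x * exit_potential p h (x + 1) + (1 - p x) * exit_potential p h (x - 1)
      = (\<Sum>y\<in>{1..<h}. p x * (Mfun p (min (x + 1) y) / d y)
          + (1 - p x) * (Mfun p (min (x - 1) y) / d y))"
    by (simp only: exit_potential_def d_def sum_distrib_left sum.distrib)
  also have "\<dots> = (\<Sum>y\<in>{1..<h}. Mfun p (min x y) / d y - (if y = x then 1 else 0))"
    using per_term by (rule sum.cong[OF refl])
  also have "\<dots> = exit_potential p h x - 1"
    unfolding exit_potential_def d_def sum_subtractf using x by simp
  finally show ?thesis .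
qed

lemma killed_step_exit_potential:
  assumes "x \<in> {0<..<h}"
  shows "killed_step p h (exit_potential p h) x \<le> exit_potential p h x - 1"
proof -
  have "0 \<le> p x * exit_potential p h (x + 1)" "0 \<le> (1 - p x) * exit_potential p h (x - 1)"
    using assms p_prob[of x] exit_potential_nonneg by auto
  then have "killed_step p h (exit_potential p h) x
      \<le> p x * exit_potential p h (x + 1) + (1 - p x) * exit_potential p h (x - 1)"
    using assms by (simp add: killed_step_eq)
  then show ?thesis
    using assms exit_potential_poisson[of x h] by simp
qed

lemma exit_potential_le:
  assumes C: "\<And>y. 1 \<le> y \<Longrightarrow> Mfun p y \<le> C * real y * lam p y" "0 \<le> C"
  shows "exit_potential p h x \<le> C / \<epsilon> * real h ^ 2"
proof -
  have "Mfun p (min x y) / (p y * lam p y) \<le> C / \<epsilon> * real h" if y: "y \<in> {1..<h}" for y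
  proof -
    have "Mfun p (min x y) \<le> C * real y * lam p y"
      using Mfun_mono[of "min x y" y] C(1)[of y] y by simp
    then have "Mfun p (min x y) / (p y * lam p y) \<le> C * real y / p y"
      using p_pos[of y] lam_pos[of y] y by (simp add: divide_le_eq)
    also have "\<dots> \<le> C * real h / \<epsilon>"
      using elliptic[of y] eps_pos y C(2) by (intro frac_le mult_left_mono) auto
    finally show ?thesis by simp
  qed
  then have "exit_potential p h x \<le> (\<Sum>y\<in>{1..<h}. C / \<epsilon> * real h)"
    unfolding exit_potential_def by (rule sum_mono)
  also have "\<dots> = real (h - 1) * (C / \<epsilon> * real h)"
    by simp
  also have "\<dots> \<le> real h * (C / \<epsilon> * real h)"
    using C(2) eps_pos by (intro mult_right_mono) auto
  also have "\<dots> = C / \<epsilon> * real h ^ 2"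
    by (simp add: power2_eq_square)
  finally show ?thesis .
qed

lemma survival_decay:
  assumes C: "\<And>y. 1 \<le> y \<Longrightarrow> Mfun p y \<le> C * real y * lam p y" "0 \<le> C"
    and x: "x \<in> {0<..<h}"
  shows "survival p h k x \<le> 2 * exp (- (ln 2 / (2 * C / \<epsilon> + 1)) * real k / real h ^ 2)"
proof -
  define D where "D = C / \<epsilon> * real h ^ 2"
  have "survival p h k x \<le> 2 * exp (- ln 2 * real k / (2 * D + 1))"
    using survival_exp_decay[of h "exit_potential p h" D x k] exit_potential_nonneg
      exit_potential_le[OF C] killed_step_exit_potential x
    unfolding D_def by blast
  also have "\<dots> \<le> 2 * exp (- (ln 2 / (2 * C / \<epsilon> + 1)) * real k / real h ^ 2)"
  proof -
    have "1 \<le> real h ^ 2" using x by simp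
    then have "2 * D + 1 \<le> (2 * C / \<epsilon> + 1) * real h ^ 2"
      unfolding D_def by (simp add: algebra_simps)
    moreover have "0 \<le> D"
      unfolding D_def using C(2) eps_pos by simp
    ultimately have "ln 2 * real k / ((2 * C / \<epsilon> + 1) * real h ^ 2) \<le> ln 2 * real k / (2 * D + 1)"
      by (intro divide_left_mono) (auto intro: add_pos_nonneg)
    then show ?thesis by simp
  qed
  finally show ?thesis .
qed

lemma Mfun_eventually_le_linear_lam:
  assumes \<kappa>: "0 < kappa \<delta>" and K0: "0 < K0"
    and lam_asymp: "(\<lambda>x. lam p x) \<sim>[at_top] (\<lambda>x. K0 * real x powr (2 * kappa \<delta> - 1) / Lfun p \<delta> x)"
    and M: "\<And>x. l \<le> x \<Longrightarrow>
      2 * kappa \<delta> * Mfun p x / (K0 * real x powr (2 * kappa \<delta>) / Lfun p \<delta> x) \<in> {7/8<..<9/8}"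
  shows "eventually (\<lambda>y. Mfun p y \<le> 9 / (8 * kappa \<delta>) * real y * lam p y) at_top"
proof -
  define g where "g x = K0 * real x powr (2 * kappa \<delta> - 1) / Lfun p \<delta> x" for x
  have "eventually (\<lambda>y. norm (g y) \<le> 2 * norm (lam p y)) at_top"
    using asymp_equiv_imp_eventually_le[OF asymp_equiv_symI[OF lam_asymp]] unfolding g_def by simp
  moreover have "eventually (\<lambda>y. max l 1 \<le> y) at_top"
    by (rule eventually_ge_at_top)
  ultimately show ?thesis
  proof eventually_elim
    case (elim y)
    then have y: "0 < y" "l \<le> y" by auto
    have g_le: "g y \<le> 2 * lam p y"
      using elim lam_pos[of y] by simp
    have A: "K0 * real y powr (2 * kappa \<delta>) / Lfun p \<delta> y = real y * g y"
      using y by (simp add: g_def powr_diff Lfun_pos)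
    have "0 < real y * g y"
      using y K0 Lfun_pos by (simp add: g_def)
    then have "2 * kappa \<delta> * Mfun p y < 9/8 * (real y * g y)"
      using M[OF y(2)] by (simp add: A divide_less_eq)
    also have "\<dots> \<le> 9/8 * (real y * (2 * lam p y))"
      using g_le by (intro mult_left_mono) auto
    finally show ?case
      using \<kappa> by (simp add: field_simps)
  qed
qed

lemma Mfun_le_linear_lam_of_eventually:
  assumes "eventually (\<lambda>y. Mfun p y \<le> C * real y * lam p y) at_top"
  obtains C' where "0 \<le> C'" "\<And>y. 1 \<le> y \<Longrightarrow> Mfun p y \<le> C' * real y * lam p y"
proof -
  obtain Y where Y: "\<And>y. Y \<le> y \<Longrightarrow> Mfun p y \<le> C * real y * lam p y"
    using assms by (auto simp: eventually_at_top_linorder)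
  define S where "S = (\<Sum>z\<in>{1..<Y}. Mfun p z / (real z * lam p z))"
  have S: "0 \<le> S"
    unfolding S_def using Mfun_nonneg lam_pos by (intro sum_nonneg divide_nonneg_pos) auto
  have "Mfun p y \<le> (max C 0 + S) * real y * lam p y" if y: "1 \<le> y" for y
  proof (cases "y < Y")
    case True
    have "Mfun p y / (real y * lam p y) \<le> S"
      unfolding S_def using True y Mfun_nonneg lam_pos
      by (intro member_le_sum divide_nonneg_pos) auto
    then have "Mfun p y \<le> S * (real y * lam p y)"
      using y lam_pos[of y] by (simp add: divide_le_eq)
    also have "\<dots> \<le> (max C 0 + S) * (real y * lam p y)"
      using lam_pos[of y] by (intro mult_right_mono) auto
    finally show ?thesis by (simp add: mult.assoc)
  next
    case False
    then have "Mfun p y \<le> C * (real y * lam p y)"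
      using Y by (simp add: mult.assoc)
    also have "\<dots> \<le> (max C 0 + S) * (real y * lam p y)"
      using lam_pos[of y] S by (intro mult_right_mono) auto
    finally show ?thesis by (simp add: mult.assoc)
  qed
  with that[of "max C 0 + S"] S show thesis by simp
qed

lemma Mfun_le_linear_lam:
  assumes "0 < kappa \<delta>" "0 < K0"
    and "(\<lambda>x. lam p x) \<sim>[at_top] (\<lambda>x. K0 * real x powr (2 * kappa \<delta> - 1) / Lfun p \<delta> x)"
    and "\<And>x. l \<le> x \<Longrightarrow>
      2 * kappa \<delta> * Mfun p x / (K0 * real x powr (2 * kappa \<delta>) / Lfun p \<delta> x) \<in> {7/8<..<9/8}"
  obtains C where "0 \<le> C" "\<And>y. 1 \<le> y \<Longrightarrow> Mfun p y \<le> C * real y * lam p y"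
  using Mfun_le_linear_lam_of_eventually[OF Mfun_eventually_le_linear_lam[OF assms]] by blast

text \<open>One step of the multiscale induction: the bound at the scale a, about h / 2^t, is carried
  over to the scale h by the hitting decomposition; t is so large that the gain
  exp(-(c/4) (4^t/16 - 1)) of the smaller scale beats the loss rho^t in M h / M a.\<close>

lemma survival_from_1_rescale:
  assumes c: "0 < c"
    and decay: "\<And>k y. y \<in> {0<..<h} \<Longrightarrow> survival p h k y \<le> 2 * exp (- c * real k / real h ^ 2)"
    and t: "2 \<le> t" "2 * \<rho> ^ t * exp (- (c / 4) * (4 ^ t / 16 - 1)) \<le> 1"
    and a: "2 \<le> a" "2 * a \<le> h" "2 ^ t * a \<le> 2 * h" "Mfun p h \<le> \<rho> ^ t * Mfun p a"
    and K: "4 * \<rho> ^ t \<le> K"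
    and IH: "\<And>j. real a ^ 2 \<le> real j \<Longrightarrow>
      survival p a j 1 \<le> K / Mfun p a * exp (- (c / 4) * real j / real a ^ 2)"
    and n: "real h ^ 2 \<le> real n"
  shows "survival p h n 1 \<le> K / Mfun p h * exp (- (c / 4) * real n / real h ^ 2)"
proof -
  define \<tau> where "\<tau> = real n / real h ^ 2"
  define X where "X = exp (- (c / 4) * \<tau>)"
  have h: "4 \<le> real h" using a by linarith
  then have "16 \<le> real h ^ 2"
    using power_mono[of 4 "real h" 2] by simp
  then have "2 \<le> real n" and \<tau>: "1 \<le> \<tau>"
    using n unfolding \<tau>_def by (simp_all only: le_divide_eq_1_pos)
  then have n2: "2 \<le> n"
    by simp
  have Ma: "1 \<le> Mfun p a" and Mh: "1 \<le> Mfun p h"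
    using a Mfun_ge_one by simp_all
  have \<rho>t: "0 < \<rho> ^ t"
    using a(4) Ma Mh by (smt (verit) mult_nonpos_nonneg)
  obtain j where j: "j \<le> n" "real n / 4 \<le> real j" "real n / 2 \<le> real (n - j)"
    using halve_time[OF n2] .
  have "0 < a" using a by simp
  note ratio = rescaled_time_ratio[OF t(1) this a(3) n j(2)]
  have "exp (- (c / 4) * (real j / real a ^ 2)) \<le> X / (2 * \<rho> ^ t)"
    unfolding X_def using ratio(1) \<tau> t c \<rho>t a
    by (intro exp_rescaled_le) (auto simp: \<tau>_def power_increasing[of 2 t "4::real", simplified])
  then have "K / Mfun p a * exp (- (c / 4) * (real j / real a ^ 2)) \<le> K / Mfun p a * (X / (2 * \<rho> ^ t))"
    using K \<rho>t Ma by (intro mult_left_mono) auto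
  then have near: "survival p a j 1 \<le> K / (2 * \<rho> ^ t) * X / Mfun p a"
    using IH[OF ratio(2)] by (simp add: mult.commute)
  define b where "b k = 2 * exp (- c * real k / real h ^ 2)" for k
  have "decseq b"
    unfolding b_def using c h by (intro decseq_SucI) (auto simp: divide_right_mono)
  then have "survival p h n 1 \<le> survival p a j 1 + Mfun p 1 / Mfun p a * b (n - j)"
    using survival_le_hitting_decomposition[of a h b j n 1] decay a j unfolding b_def by simp
  also have "b (n - j) \<le> 2 * X"
  proof -
    have "c / 4 * \<tau> \<le> c * real (n - j) / real h ^ 2"
      using j(3) c h unfolding \<tau>_def by (simp add: field_simps)
    then show ?thesis unfolding b_def X_def by simp
  qed
  then have "Mfun p 1 / Mfun p a * b (n - j) \<le> 2 * X / Mfun p a"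
    using Ma by (simp add: divide_right_mono)
  finally have "survival p h n 1 \<le> (K / (2 * \<rho> ^ t) + 2) * X / Mfun p a"
    using near by (simp add: add_divide_distrib distrib_right)
  also have "\<dots> \<le> K / \<rho> ^ t * X / Mfun p a"
    using K \<rho>t Ma unfolding X_def by (intro divide_right_mono mult_right_mono) (auto simp: field_simps)
  also have "\<dots> = K * X / (\<rho> ^ t * Mfun p a)"
    by simp
  also have "\<dots> \<le> K * X / Mfun p h"
    using a(4) Mh K \<rho>t unfolding X_def by (intro divide_left_mono) auto
  finally show ?thesis
    by (simp add: X_def \<tau>_def)
qed

lemma survival_from_1_le:
  assumes c: "0 < c"
    and decay: "\<And>h k y. y \<in> {0<..<h} \<Longrightarrow> survival p h k y \<le> 2 * exp (- c * real k / real h ^ 2)"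
    and \<rho>: "1 \<le> \<rho>" and doubling: "\<And>x i. l \<le> x \<Longrightarrow> Mfun p (2 ^ i * x) \<le> \<rho> ^ i * Mfun p x"
  obtains K where "0 < K"
    "\<And>h n. 2 \<le> h \<Longrightarrow> real h ^ 2 \<le> real n \<Longrightarrow>
      survival p h n 1 \<le> K / Mfun p h * exp (- (c / 4) * real n / real h ^ 2)"
proof -
  obtain t where t: "2 \<le> t" "2 * \<rho> ^ t * exp (- (c / 4) * (4 ^ t / 16 - 1)) \<le> 1"
    using exists_scale_exponent[OF \<rho>, of "c / 4"] c by auto
  define H where "H = 2 ^ t * (l + 2)"
  define K where "K = 4 * \<rho> ^ t + 2 * Mfun p H"
  have K: "0 < K" "4 * \<rho> ^ t \<le> K"
    unfolding K_def using \<rho> Mfun_nonneg[of H] by (simp_all add: add_pos_nonneg)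
  have "survival p h n 1 \<le> K / Mfun p h * exp (- (c / 4) * real n / real h ^ 2)"
    if "2 \<le> h" "real h ^ 2 \<le> real n" for h n
    using that
  proof (induction h arbitrary: n rule: less_induct)
    case (less h)
    have Mh: "1 \<le> Mfun p h" using less.prems Mfun_ge_one by simp
    show ?case
    proof (cases "h < H")
      case True
      have "survival p h n 1 \<le> 2 * exp (- c * real n / real h ^ 2)"
        using decay less.prems by simp
      also have "\<dots> \<le> 2 * exp (- (c / 4) * real n / real h ^ 2)"
      proof -
        have "(c / 4) * (real n / real h ^ 2) \<le> c * (real n / real h ^ 2)"
          using c by (intro mult_right_mono) auto
        then show ?thesis by simp
      qed
      also have "\<dots> \<le> K / Mfun p h * exp (- (c / 4) * real n / real h ^ 2)"
      proof -
        have "0 \<le> \<rho> ^ t"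
          using \<rho> by simp
        then have "2 * Mfun p h \<le> K"
          unfolding K_def using Mfun_mono[OF less_imp_le[OF True]] by linarith
        then show ?thesis
          using Mh by (intro mult_right_mono) (simp_all add: le_divide_eq)
      qed
      finally show ?thesis .
    next
      case False
      then obtain a where a: "l \<le> a" "2 \<le> a" "2 * a \<le> h" "h \<le> 2 ^ t * a" "2 ^ t * a \<le> 2 * h"
        using coarse_scale[OF t(1), of l h] unfolding H_def by auto
      have "Mfun p h \<le> \<rho> ^ t * Mfun p a"
        using Mfun_mono[OF a(4)] doubling[OF a(1), of t] by simp
      then show ?thesis
        using survival_from_1_rescale[OF c decay t a(2,3,5) _ K(2) _ less.prems(2)] less.IH[of a] a
        by simp
    qed
  qed
  with K(1) that show thesis by blast
qed

lemma stay_prob_le_of_survival_bound: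
  assumes c: "0 < c" and K: "0 < K"
    and bound: "\<And>h n. 2 \<le> h \<Longrightarrow> real h ^ 2 \<le> real n \<Longrightarrow>
      survival p h n 1 \<le> K / Mfun p h * exp (- c * real n / real h ^ 2)"
    and h: "2 \<le> h" and m: "4 * real h ^ 2 \<le> real m"
  shows "stay_prob p h m \<le> K * exp c / Mfun p h * exp (- c * real m / real h ^ 2)"
proof -
  have h2: "1 \<le> real h ^ 2" using h by simp
  then have m1: "1 \<le> m" and shift: "real (m - 1) = real m - 1"
    using m by (simp_all add: of_nat_diff)
  have "stay_prob p h m = survival p h (m - 1) 1"
    using stay_prob_eq_survival[OF h m1] .
  also have "\<dots> \<le> K / Mfun p h * exp (- c * real (m - 1) / real h ^ 2)"
    using bound[OF h, of "m - 1"] m h2 shift by linarith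
  also have "exp (- c * real (m - 1) / real h ^ 2) = exp (- c * real m / real h ^ 2) * exp (c / real h ^ 2)"
    unfolding shift by (simp add: diff_divide_distrib algebra_simps flip: exp_add)
  also have "K / Mfun p h * (exp (- c * real m / real h ^ 2) * exp (c / real h ^ 2))
      \<le> K / Mfun p h * (exp (- c * real m / real h ^ 2) * exp c)"
    using c K h2 Mfun_ge_one[of h] h by (intro mult_left_mono) (auto simp: divide_le_eq)
  finally show ?thesis
    by (simp add: ac_simps)
qed

end

theorem lemma4p2:
  fixes p :: "nat \<Rightarrow> real" and \<delta> \<epsilon> K0 :: real and l1 :: nat
  assumes delta: "\<delta> > -1"
    and eps: "\<epsilon> > 0"
    and ellip: "\<And>x. x \<ge> 1 \<Longrightarrow> \<epsilon> \<le> p x \<and> p x \<le> 1 - \<epsilon>"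
    and Ro: "((\<lambda>x. real x * Rterm p \<delta> x) \<longlongrightarrow> 0) at_top"
    and K0: "K0 > 0"
    and lamasym: "(\<lambda>x. lam p x) \<sim>[at_top]
                    (\<lambda>x. K0 * real x powr (2 * kappa \<delta> - 1) / Lfun p \<delta> x)"
    and l1: "l1 \<ge> 1"
    and l1a: "\<And>x. x \<ge> l1 \<Longrightarrow> real x * \<bar>Rterm p \<delta> x\<bar> \<le> 1/2"
    and l1b: "\<And>x. x \<ge> l1 \<Longrightarrow>
               2 * kappa \<delta> * Mfun p x / (K0 * real x powr (2 * kappa \<delta>) / Lfun p \<delta> x)
                 \<in> {7/8<..<9/8}"
    and l1c: "\<And>x. x \<ge> l1 \<Longrightarrow>
               2 * kappa \<delta> * (Mfun p (2 * x) - Mfun p x) /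
                 (K0 * (2 powr (2 * kappa \<delta>) - 1) * real x powr (2 * kappa \<delta>) / Lfun p \<delta> x)
                 \<in> {7/8<..<9/8}"
    and l1d: "\<And>x. x \<ge> l1 \<Longrightarrow> \<delta> \<noteq> 0 \<Longrightarrow>
               \<bar>real x * (2 * p x - 1) + \<delta> / 2\<bar> < \<bar>\<delta>\<bar> / 4"
  shows "\<exists>K3 K4. K3 > 0 \<and> K4 > 0 \<and>
           (\<forall>h m. h > l1 \<longrightarrow> real m \<ge> 4 * real h ^ 2 \<longrightarrow>
              stay_prob p h m \<le> K3 / Mfun p h * exp (- K4 * real m / real h ^ 2))"
proof -
  interpret elliptic_walk p \<epsilon>
    using eps ellip by unfold_locales
  have \<kappa>: "0 < kappa \<delta>"
    using kappa_pos[OF delta] .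
  obtain C where C: "0 \<le> C" "\<And>y. 1 \<le> y \<Longrightarrow> Mfun p y \<le> C * real y * lam p y"
    using Mfun_le_linear_lam[OF \<kappa> K0 lamasym l1b] by blast
  obtain \<rho> where \<rho>: "1 \<le> \<rho>" "\<And>x i. l1 \<le> x \<Longrightarrow> Mfun p (2 ^ i * x) \<le> \<rho> ^ i * Mfun p x"
    using Mfun_doubling[OF \<kappa> K0 l1 l1b l1c] by blast
  define c where "c = ln 2 / (2 * C / \<epsilon> + 1)"
  have c: "0 < c"
    unfolding c_def using C(1) eps by (intro divide_pos_pos add_nonneg_pos) auto
  obtain K where K: "0 < K" "\<And>h n. 2 \<le> h \<Longrightarrow> real h ^ 2 \<le> real n \<Longrightarrow>
      survival p h n 1 \<le> K / Mfun p h * exp (- (c / 4) * real n / real h ^ 2)"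
    using survival_from_1_le[OF c survival_decay[OF C(2,1), folded c_def] \<rho>] by blast
  show ?thesis
    using stay_prob_le_of_survival_bound[of "c / 4" K] c K l1
    by (intro exI[of _ "K * exp (c / 4)"] exI[of _ "c / 4"]) auto
qed

end
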